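(* Let $\mathcal W$ be a monotonic game on $[n]$ and $i\neq j$ players. Then the game $\hat{\mathcal W}$ obtained by imposing an asymmetric non-reciprocal strong YES-quarrel of $i$ against $j$ is quasi-monotonic (i.e. 1-monotonic).
   Context: Players are $[n]=\{1,\dots,n\}$. A binary voting game on $[n]$ is identified with its collection $\mathcal W\subseteq 2^{[n]}$ of winning sets ($S\in\mathcal W$ means the division in which exactly the members of $S$ vote YES has outcome YES). It is monotonic if $T\subseteq S$ and $T\in\mathcal W$ imply $S\in\mathcal W$. For an integer $k\ge0$, a game $\mathcal W$ is $k$-monotonic if for every $S\subseteq[n]$ with $S\notin\mathcal W$ and every proper subset $T\subsetneq S$ there exists $K$ with $|K|\le k$ such that $T\setminus K\notin\mathcal W$; quasi-monotonic means 1-monotonic. Asymmetric non-reciprocal strong YES-quarrel of $i$ against $j$: for every $S\subseteq[n]\setminus\{i,j\}$, $S\cup\{i,j\}\in\hat{\mathcal W}\iff S\cup\{j\}\in\mathcal W$; $S\cup\{i\}\in\hat{\mathcal W}\iff S\cup\{i\}\in\mathcal W$; $S\cup\{j\}\in\hat{\mathcal W}\iff S\cup\{j\}\in\mathcal W$; $S\in\hat{\mathcal W}\iff S\in\mathcal W$. *)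

theory Defs
  imports Main
begin

definition is_game :: "nat \<Rightarrow> nat set set \<Rightarrow> bool" where
  "is_game n W \<longleftrightarrow> W \<subseteq> Pow {1..n}"

definition monotonic :: "nat \<Rightarrow> nat set set \<Rightarrow> bool" where
  "monotonic n W \<longleftrightarrow>
     (\<forall>S T. S \<subseteq> {1..n} \<longrightarrow> T \<subseteq> S \<longrightarrow> T \<in> W \<longrightarrow> S \<in> W)"

definition k_monotonic :: "nat \<Rightarrow> nat \<Rightarrow> nat set set \<Rightarrow> bool" where
  "k_monotonic k n W \<longleftrightarrow>
     (\<forall>S T. S \<subseteq> {1..n} \<longrightarrow> S \<notin> W \<longrightarrow> T \<subset> S \<longrightarrow>
        (\<exists>K. K \<subseteq> {1..n} \<and> card K \<le> k \<and> T - K \<notin> W))"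

definition quasi_monotonic :: "nat \<Rightarrow> nat set set \<Rightarrow> bool" where
  "quasi_monotonic n W \<longleftrightarrow> k_monotonic 1 n W"

definition asym_nonrecip_strong_yes_quarrel ::
  "nat \<Rightarrow> nat \<Rightarrow> nat \<Rightarrow> nat set set \<Rightarrow> nat set set \<Rightarrow> bool" where
  "asym_nonrecip_strong_yes_quarrel n i j W W' \<longleftrightarrow>
     (\<forall>S. S \<subseteq> {1..n} - {i, j} \<longrightarrow>
        (S \<union> {i, j} \<in> W' \<longleftrightarrow> S \<union> {j} \<in> W) \<and>
        (S \<union> {i} \<in> W' \<longleftrightarrow> S \<union> {i} \<in> W) \<and>
        (S \<union> {j} \<in> W' \<longleftrightarrow> S \<union> {j} \<in> W) \<and>
        (S \<in> W' \<longleftrightarrow> S \<in> W))"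

end

theory Submission
  imports Defs
begin

text \<open>Take \<open>K = {i}\<close>. Deleting \<open>i\<close> from a losing coalition \<open>S\<close> of the quarrelled game gives a
losing coalition of \<open>W\<close>: if \<open>i, j \<in> S\<close> this is the quarrel rule for \<open>{i, j}\<close>, if only \<open>i \<in> S\<close> it
follows from monotonicity of \<open>W\<close>, and otherwise nothing changes. For any \<open>T \<subset> S\<close>, monotonicity of
\<open>W\<close> then makes \<open>T - {i}\<close> losing in \<open>W\<close>, and the two games agree on coalitions without \<open>i\<close>.\<close>

lemma quarrel_rules:
  assumes "asym_nonrecip_strong_yes_quarrel n i j W W'" and "R \<subseteq> {1..n} - {i, j}"
  shows "R \<union> {i, j} \<in> W' \<longleftrightarrow> R \<union> {j} \<in> W"
    and "R \<union> {i} \<in> W' \<longleftrightarrow> R \<union> {i} \<in> W"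
    and "R \<union> {j} \<in> W' \<longleftrightarrow> R \<union> {j} \<in> W"
    and "R \<in> W' \<longleftrightarrow> R \<in> W"
  using assms unfolding asym_nonrecip_strong_yes_quarrel_def by blast+

lemma quarrel_agrees_without_quarreller:
  assumes quarrel: "asym_nonrecip_strong_yes_quarrel n i j W W'"
    and "X \<subseteq> {1..n}" and "i \<notin> X"
  shows "X \<in> W' \<longleftrightarrow> X \<in> W"
proof -
  have R: "X - {i, j} \<subseteq> {1..n} - {i, j}" using assms(2) by auto
  show ?thesis
  proof (cases "j \<in> X")
    case True
    then have "(X - {i, j}) \<union> {j} = X" using assms(3) by auto
    with quarrel_rules(3)[OF quarrel R] show ?thesis by simp
  next
    case False
    then have "X - {i, j} = X" using assms(3) by auto
    with quarrel_rules(4)[OF quarrel R] show ?thesis by simp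
  qed
qed

lemma quarrel_losing_minus_quarreller:
  assumes quarrel: "asym_nonrecip_strong_yes_quarrel n i j W W'"
    and mono: "monotonic n W" and "i \<noteq> j"
    and S: "S \<subseteq> {1..n}" and lose: "S \<notin> W'"
  shows "S - {i} \<notin> W"
proof -
  have R: "S - {i, j} \<subseteq> {1..n} - {i, j}" using S by auto
  consider "i \<notin> S" | "i \<in> S" "j \<in> S" | "i \<in> S" "j \<notin> S" by blast
  then show ?thesis
  proof cases
    case 1
    then show ?thesis
      using quarrel_agrees_without_quarreller[OF quarrel S] lose by simp
  next
    case 2
    then have "(S - {i, j}) \<union> {i, j} = S" and "(S - {i, j}) \<union> {j} = S - {i}"
      using \<open>i \<noteq> j\<close> by auto
    with quarrel_rules(1)[OF quarrel R] lose show ?thesis by simp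
  next
    case 3
    then have "(S - {i, j}) \<union> {i} = S" by auto
    with quarrel_rules(2)[OF quarrel R] lose have "S \<notin> W" by simp
    then show ?thesis
      using mono S unfolding monotonic_def by blast
  qed
qed

theorem theorem11:
  fixes n i j :: nat and W W' :: "nat set set"
  assumes "is_game n W" and "monotonic n W"
    and "i \<in> {1..n}" and "j \<in> {1..n}" and "i \<noteq> j"
    and "is_game n W'"
    and "asym_nonrecip_strong_yes_quarrel n i j W W'"
  shows "quasi_monotonic n W'"
  unfolding quasi_monotonic_def k_monotonic_def
proof (intro allI impI)
  fix S T
  assume S: "S \<subseteq> {1..n}" and lose: "S \<notin> W'" and "T \<subset> S"
  have "S - {i} \<notin> W"
    using quarrel_losing_minus_quarreller[OF assms(7,2,5) S lose] .
  moreover have "S - {i} \<subseteq> {1..n}" and "T - {i} \<subseteq> S - {i}"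
    using S \<open>T \<subset> S\<close> by auto
  ultimately have "T - {i} \<notin> W"
    using assms(2) unfolding monotonic_def by blast
  moreover have "T - {i} \<subseteq> {1..n}" using S \<open>T \<subset> S\<close> by auto
  ultimately have "T - {i} \<notin> W'"
    using quarrel_agrees_without_quarreller[OF assms(7)] by simp
  then show "\<exists>K. K \<subseteq> {1..n} \<and> card K \<le> 1 \<and> T - K \<notin> W'"
    using assms(3) by (intro exI[of _ "{i}"]) simp
qed

end
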